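(* Let $N\ge 1$ and consider a network with feature tensors $X_0,X_1,\dots,X_N$, where $X_L\in\mathbb{R}^{K\times \mathrm{rows}_L\times \mathrm{cols}_L}$, defined for $L=1,\dots,N$ by $$U_L=\mathrm{ReLU}\Big(\big(1-\tfrac1L\big)X_{L-1}+\tfrac1L\tanh\big(F_L(X_{L-1})\big)\Big),\qquad X_L=M_L(U_L),$$ where each $F_L:\mathbb{R}^{K\times\mathrm{rows}_{L-1}\times\mathrm{cols}_{L-1}}\to\mathbb{R}^{K\times\mathrm{rows}_{L-1}\times\mathrm{cols}_{L-1}}$ is an arbitrary map, $\mathrm{ReLU},\tanh$ act entrywise, and each $M_L$ is either the identity or a non-overlapping (stride = kernel) spatial max pooling, channelwise. Assume $\mathrm{rows}_T$ divides $\mathrm{rows}_L$ and $\mathrm{cols}_T$ divides $\mathrm{cols}_L$ whenever $L\le T$. For $0\le L\le T\le N$ define rescaled maps $S^{(T)}_0=0$ and, for $L\ge1$, $$S^{(T)}_L=\frac{L}{N}\,\mathrm{Pool}(X_L,T),\qquad \mathrm{Pool}(X_L,T)=\mathrm{MaxPool}\Big(X_L,\ \mathrm{ker}=\big(\tfrac{\mathrm{rows}_L}{\mathrm{rows}_T},\tfrac{\mathrm{cols}_L}{\mathrm{cols}_T}\big)\Big)$$ (non-overlapping, channelwise). Then (bounded increment through depth) for every target layer $T$ with $1\le T\le N$, every $1\le L\le T$, every channel $k$ and every position $(x,y)$, $$\Big|S^{(T)}_{L,k}(x,y)-S^{(T)}_{L-1,k}(x,y)\Big|\le \delta,\qquad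 \delta=\frac1N.$$
   Context: This is the "feature-aligned" CNN with dampened skip connections: layer $L$ mixes the previous features with weight $1-\beta$ and a $\tanh$-bounded block output with weight $\beta=1/L$, followed by ReLU and optionally max pooling. $N$ is the total number of layers (denoted $N_L$ in the paper). All feature tensors have the same number $K$ of channels; $X_0$ is an arbitrary real tensor (the projected input). *)

theory Defs
  imports Complex_Main
begin

text \<open>A feature tensor with K channels is represented as a function
  channel => row => column => real; only entries with indices below the
  current sizes (K, rows, cols) are meaningful.\<close>
type_synonym tensor = "nat \<Rightarrow> nat \<Rightarrow> nat \<Rightarrow> real"

definition relu :: "real \<Rightarrow> real" where
  "relu r = max 0 r"

definition maxpool :: "nat \<Rightarrow> nat \<Rightarrow> tensor \<Rightarrow> tensor" where
  "maxpool a b X = (\<lambda>k x y. Max {X k (a * x + i) (b * y + j) | i j. i < a \<and> j < b})"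

definition block_update :: "nat \<Rightarrow> (tensor \<Rightarrow> tensor) \<Rightarrow> tensor \<Rightarrow> tensor" where
  "block_update L FL Xprev = (\<lambda>k x y.
      relu ((1 - 1 / real L) * Xprev k x y + (1 / real L) * tanh (FL Xprev k x y)))"

definition pool_to :: "(nat \<Rightarrow> nat) \<Rightarrow> (nat \<Rightarrow> nat) \<Rightarrow> (nat \<Rightarrow> tensor) \<Rightarrow> nat \<Rightarrow> nat \<Rightarrow> tensor" where
  "pool_to rows cols X L T = maxpool (rows L div rows T) (cols L div cols T) (X L)"

definition rescaled :: "nat \<Rightarrow> (nat \<Rightarrow> nat) \<Rightarrow> (nat \<Rightarrow> nat) \<Rightarrow> (nat \<Rightarrow> tensor) \<Rightarrow> nat \<Rightarrow> nat \<Rightarrow> tensor" where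
  "rescaled N rows cols X T L =
     (if L = 0 then (\<lambda>k x y. 0)
      else (\<lambda>k x y. real L / real N * pool_to rows cols X L T k x y))"

end

theory Submission
  imports Defs
begin

text \<open>Multiplying the damped update by L gives
  L U_L = ReLU((L - 1) X_{L-1} + tanh(F_L(X_{L-1}))). Every X_{L-1} with L \<ge> 2 is a
  (pooled) ReLU output, hence nonnegative, so (L - 1) X_{L-1} \<ge> 0 and ReLU moves it by
  at most |tanh| < 1; thus L U_L and (L - 1) X_{L-1} differ by at most 1 entrywise.
  Non-overlapping max poolings compose by multiplying kernels, so L Pool(X_L, T) and
  (L - 1) Pool(X_{L-1}, T) are max poolings of L U_L and (L - 1) X_{L-1} over the same
  windows, and max pooling is 1-Lipschitz for the sup norm.\<close>

lemma maxpool_eq_Max_image: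
  "maxpool a b U k x y = Max ((\<lambda>(i, j). U k (a * x + i) (b * y + j)) ` ({..<a} \<times> {..<b}))"
proof -
  have "{U k (a * x + i) (b * y + j) | i j. i < a \<and> j < b}
      = (\<lambda>(i, j). U k (a * x + i) (b * y + j)) ` ({..<a} \<times> {..<b})"
    by auto
  then show ?thesis
    by (simp add: maxpool_def)
qed

lemma maxpool_ge:
  assumes "i < a" "j < b"
  shows "U k (a * x + i) (b * y + j) \<le> maxpool a b U k x y"
  unfolding maxpool_eq_Max_image by (rule Max_ge) (use assms in auto)

lemma maxpool_attained:
  assumes "0 < a" "0 < b"
  obtains i j where "i < a" "j < b" "maxpool a b U k x y = U k (a * x + i) (b * y + j)"
proof -
  have "maxpool a b U k x y \<in> (\<lambda>(i, j). U k (a * x + i) (b * y + j)) ` ({..<a} \<times> {..<b})"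
    unfolding maxpool_eq_Max_image by (rule Max_in) (use assms in auto)
  then show ?thesis
    using that by auto
qed

lemma maxpool_nonneg:
  assumes "0 < a" "0 < b" "\<And>i j. 0 \<le> U k i j"
  shows "0 \<le> maxpool a b U k x y"
  using assms by (metis maxpool_attained)

lemma mult_add_less_mult:
  fixes a A i i' :: nat
  assumes "i < A" "i' < a"
  shows "a * i + i' < a * A"
proof -
  have "a * i + i' < a * Suc i"
    using assms(2) by simp
  also have "\<dots> \<le> a * A"
    using assms(1) by (intro mult_le_mono2) simp
  finally show ?thesis .
qed

lemma maxpool_maxpool:
  assumes "0 < a" "0 < b" "0 < A" "0 < B"
  shows "maxpool A B (maxpool a b U) = maxpool (a * A) (b * B) U"
proof (intro ext antisym)
  fix k x y
  obtain i j where ij: "i < A" "j < B"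
    and outer: "maxpool A B (maxpool a b U) k x y = maxpool a b U k (A * x + i) (B * y + j)"
    using maxpool_attained[OF assms(3,4)] by blast
  obtain i' j' where ij': "i' < a" "j' < b"
    and inner: "maxpool a b U k (A * x + i) (B * y + j) = U k (a * (A * x + i) + i') (b * (B * y + j) + j')"
    using maxpool_attained[OF assms(1,2)] by blast
  have in_window: "a * i + i' < a * A" "b * j + j' < b * B"
    using ij ij' by (simp_all add: mult_add_less_mult)
  have reindex: "a * (A * x + i) + i' = a * A * x + (a * i + i')"
    "b * (B * y + j) + j' = b * B * y + (b * j + j')"
    by (simp_all add: algebra_simps)
  show "maxpool A B (maxpool a b U) k x y \<le> maxpool (a * A) (b * B) U k x y"
    unfolding outer inner reindex by (rule maxpool_ge) (fact in_window)+
next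
  fix k x y
  have "0 < a * A" "0 < b * B"
    using assms by simp_all
  then obtain i j where ij: "i < a * A" "j < b * B"
    and val: "maxpool (a * A) (b * B) U k x y = U k (a * A * x + i) (b * B * y + j)"
    by (rule maxpool_attained)
  have "a * A * x + i = a * (A * x + i div a) + i mod a"
    "b * B * y + j = b * (B * y + j div b) + j mod b"
    by (simp_all add: algebra_simps)
  then have "maxpool (a * A) (b * B) U k x y \<le> maxpool a b U k (A * x + i div a) (B * y + j div b)"
    unfolding val using assms by (simp add: maxpool_ge)
  also have "\<dots> \<le> maxpool A B (maxpool a b U) k x y"
    using ij assms by (intro maxpool_ge) (simp_all add: div_less_iff_less_mult mult.commute)
  finally show "maxpool (a * A) (b * B) U k x y \<le> maxpool A B (maxpool a b U) k x y" .
qed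

lemma maxpool_scaled_dist_le:
  fixes \<alpha> \<beta> e :: real
  assumes "0 < a" "0 < b" "0 \<le> \<alpha>" "0 \<le> \<beta>"
    and dist: "\<And>i j. \<bar>\<alpha> * U k i j - \<beta> * V k i j\<bar> \<le> e"
  shows "\<bar>\<alpha> * maxpool a b U k x y - \<beta> * maxpool a b V k x y\<bar> \<le> e"
proof -
  obtain i j where ij: "i < a" "j < b" "maxpool a b U k x y = U k (a * x + i) (b * y + j)"
    using maxpool_attained[OF assms(1,2)] by blast
  obtain i' j' where ij': "i' < a" "j' < b" "maxpool a b V k x y = V k (a * x + i') (b * y + j')"
    using maxpool_attained[OF assms(1,2)] by blast
  have "\<beta> * V k (a * x + i) (b * y + j) \<le> \<beta> * maxpool a b V k x y"
    using ij assms(4) by (simp add: maxpool_ge mult_left_mono)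
  moreover have "\<alpha> * U k (a * x + i') (b * y + j') \<le> \<alpha> * maxpool a b U k x y"
    using ij' assms(3) by (simp add: maxpool_ge mult_left_mono)
  ultimately show ?thesis
    using ij(3) ij'(3) dist[of "a * x + i" "b * y + j"] dist[of "a * x + i'" "b * y + j'"]
    by (simp add: abs_le_iff)
qed

lemma mult_relu: "0 \<le> a \<Longrightarrow> a * relu r = relu (a * r)"
  by (simp add: relu_def max_mult_distrib_left)

lemma relu_add_dist_le: "0 \<le> c \<Longrightarrow> \<bar>relu (c + t) - c\<bar> \<le> \<bar>t\<bar>"
  by (simp add: relu_def)

lemma block_update_nonneg: "0 \<le> block_update L FL Xprev k i j"
  by (simp add: block_update_def relu_def)

lemma scaled_block_update:
  assumes "1 \<le> L"
  shows "real L * block_update L FL Xprev k i j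
           = relu (real (L - 1) * Xprev k i j + tanh (FL Xprev k i j))"
proof -
  have "real L * ((1 - 1 / real L) * v + 1 / real L * t) = real (L - 1) * v + t" for v t
    using assms by (simp add: of_nat_diff field_simps)
  then show ?thesis
    by (simp add: block_update_def mult_relu)
qed

lemma scaled_block_update_dist_le:
  assumes "1 \<le> L" "0 \<le> real (L - 1) * Xprev k i j"
  shows "\<bar>real L * block_update L FL Xprev k i j - real (L - 1) * Xprev k i j\<bar> \<le> 1"
proof -
  have "\<bar>relu (real (L - 1) * Xprev k i j + tanh (FL Xprev k i j)) - real (L - 1) * Xprev k i j\<bar>
      \<le> \<bar>tanh (FL Xprev k i j)\<bar>"
    by (rule relu_add_dist_le[OF assms(2)])
  also have "\<dots> \<le> 1"
    using tanh_real_bounds[of "FL Xprev k i j"] by (simp add: abs_le_iff)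
  finally show ?thesis
    by (simp add: scaled_block_update[OF assms(1)])
qed

locale dampened_cnn =
  fixes N :: nat
    and rows cols :: "nat \<Rightarrow> nat"
    and X :: "nat \<Rightarrow> tensor"
    and F :: "nat \<Rightarrow> tensor \<Rightarrow> tensor"
    and pooled :: "nat \<Rightarrow> bool"
  assumes rows_pos: "\<And>L. L \<le> N \<Longrightarrow> rows L > 0"
    and cols_pos: "\<And>L. L \<le> N \<Longrightarrow> cols L > 0"
    and rows_dvd: "\<And>L T. L \<le> T \<Longrightarrow> T \<le> N \<Longrightarrow> rows T dvd rows L"
    and cols_dvd: "\<And>L T. L \<le> T \<Longrightarrow> T \<le> N \<Longrightarrow> cols T dvd cols L"
    and ident_dims: "\<And>L. 1 \<le> L \<Longrightarrow> L \<le> N \<Longrightarrow> \<not> pooled L \<Longrightarrow>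
                       rows L = rows (L - 1) \<and> cols L = cols (L - 1)"
    and layer: "\<And>L. 1 \<le> L \<Longrightarrow> L \<le> N \<Longrightarrow>
        X L = (if pooled L
               then maxpool (rows (L - 1) div rows L) (cols (L - 1) div cols L)
                      (block_update L (F L) (X (L - 1)))
               else block_update L (F L) (X (L - 1)))"
begin

lemma kernel_pos:
  assumes "L \<le> T" "T \<le> N"
  shows "0 < rows L div rows T" "0 < cols L div cols T"
  using assms rows_pos[of L] rows_pos[of T] rows_dvd[OF assms] cols_pos[of L] cols_pos[of T] cols_dvd[OF assms]
  by (simp_all add: div_greater_zero_iff dvd_imp_le)

lemma kernel_mult:
  assumes "L \<le> M" "M \<le> T" "T \<le> N"
  shows "(rows L div rows M) * (rows M div rows T) = rows L div rows T"
    and "(cols L div cols M) * (cols M div cols T) = cols L div cols T"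
  using assms rows_dvd[of L M] rows_dvd[of M T] cols_dvd[of L M] cols_dvd[of M T]
  by (simp_all add: div_mult_swap)

lemma layer_nonneg:
  assumes "1 \<le> L" "L \<le> N"
  shows "0 \<le> X L k i j"
  using layer[OF assms] kernel_pos[of "L - 1" L] assms
  by (simp add: block_update_nonneg maxpool_nonneg)

lemma pool_to_layer:
  assumes "1 \<le> L" "L \<le> T" "T \<le> N"
  shows "pool_to rows cols X L T
           = maxpool (rows (L - 1) div rows T) (cols (L - 1) div cols T) (block_update L (F L) (X (L - 1)))"
proof (cases "pooled L")
  case True
  then show ?thesis
    using assms layer[of L] kernel_pos[of "L - 1" L] kernel_pos[of L T] kernel_mult[of "L - 1" L T]
    by (simp add: pool_to_def maxpool_maxpool)
next
  case False
  then show ?thesis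
    using assms layer[of L] ident_dims[of L] by (simp add: pool_to_def)
qed

end

theorem theorem2:
  fixes N K :: nat
    and rows cols :: "nat \<Rightarrow> nat"
    and X :: "nat \<Rightarrow> tensor"
    and F :: "nat \<Rightarrow> tensor \<Rightarrow> tensor"
    and pooled :: "nat \<Rightarrow> bool"
  assumes N_pos: "N \<ge> 1"
    and rows_pos: "\<And>L. L \<le> N \<Longrightarrow> rows L > 0"
    and cols_pos: "\<And>L. L \<le> N \<Longrightarrow> cols L > 0"
    and rows_dvd: "\<And>L T. L \<le> T \<Longrightarrow> T \<le> N \<Longrightarrow> rows T dvd rows L"
    and cols_dvd: "\<And>L T. L \<le> T \<Longrightarrow> T \<le> N \<Longrightarrow> cols T dvd cols L"
    and ident_dims: "\<And>L. 1 \<le> L \<Longrightarrow> L \<le> N \<Longrightarrow> \<not> pooled L \<Longrightarrow>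
                       rows L = rows (L - 1) \<and> cols L = cols (L - 1)"
    and layer: "\<And>L. 1 \<le> L \<Longrightarrow> L \<le> N \<Longrightarrow>
        X L = (if pooled L
               then maxpool (rows (L - 1) div rows L) (cols (L - 1) div cols L)
                      (block_update L (F L) (X (L - 1)))
               else block_update L (F L) (X (L - 1)))"
  shows "\<forall>T L k x y. 1 \<le> T \<and> T \<le> N \<and> 1 \<le> L \<and> L \<le> T \<and> k < K \<and> x < rows T \<and> y < cols T \<longrightarrow>
           \<bar>rescaled N rows cols X T L k x y - rescaled N rows cols X T (L - 1) k x y\<bar> \<le> 1 / real N"
proof (intro allI impI)
  interpret dampened_cnn N rows cols X F pooled
    using rows_pos cols_pos rows_dvd cols_dvd ident_dims layer by unfold_locales
  fix T L k x y
  assume "1 \<le> T \<and> T \<le> N \<and> 1 \<le> L \<and> L \<le> T \<and> k < K \<and> x < rows T \<and> y < cols T"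
  then have L: "1 \<le> L" "L \<le> T" "T \<le> N"
    by simp_all
  define a b where "a = rows (L - 1) div rows T" and "b = cols (L - 1) div cols T"
  define U where "U = block_update L (F L) (X (L - 1))"
  have prev_nonneg: "0 \<le> real (L - 1) * X (L - 1) k i j" for i j
    using L layer_nonneg[of "L - 1"] by (cases "L = 1") simp_all
  have "\<bar>real L * U k i j - real (L - 1) * X (L - 1) k i j\<bar> \<le> 1" for i j
    unfolding U_def using L(1) prev_nonneg by (rule scaled_block_update_dist_le)
  then have "\<bar>real L * maxpool a b U k x y - real (L - 1) * maxpool a b (X (L - 1)) k x y\<bar> \<le> 1"
    using L kernel_pos[of "L - 1" T] by (intro maxpool_scaled_dist_le) (simp_all add: a_def b_def)
  moreover have "rescaled N rows cols X T L k x y - rescaled N rows cols X T (L - 1) k x y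
      = (real L * maxpool a b U k x y - real (L - 1) * maxpool a b (X (L - 1)) k x y) / real N"
    using L N_pos pool_to_layer[of L T]
    by (simp add: rescaled_def pool_to_def a_def b_def U_def field_simps)
  ultimately show "\<bar>rescaled N rows cols X T L k x y - rescaled N rows cols X T (L - 1) k x y\<bar>
      \<le> 1 / real N"
    by (simp add: divide_right_mono)
qed

end
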